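(* Let $\delta>0$ and $k,l\in\mathbb{N}$. Then there exists $n_0\in\mathbb{N}$ such that for every $n\ge n_0$ and every subset $\mathcal{A}$ of $[\{1,\dots,n\}]^k$ with $|\mathcal{A}|\ge\delta\binom{n}{k}$, there exists a plegma family $(s_j)_{j=1}^l$ in $[\mathbb{N}]^k$ with $s_j\in\mathcal{A}$ for every $1\le j\le l$.
   Context: $[A]^k$ is the set of $k$-element subsets of $A$, each identified with its increasing enumeration $s(1)<\dots<s(k)$. A finite sequence $(s_j)_{j=1}^l$ in $[\mathbb{N}]^k$ is a plegma family if $s_1(i)<s_2(i)<\dots<s_l(i)$ for every $1\le i\le k$ and $s_l(i)<s_1(i+1)$ for every $1\le i<k$. *)

theory Defs
  imports Complex_Main
begin

definition enum_elem :: "nat set \<Rightarrow> nat \<Rightarrow> nat" where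
  "enum_elem s i = sorted_list_of_set s ! (i - 1)"

definition ksubsets :: "nat set \<Rightarrow> nat \<Rightarrow> nat set set" where
  "ksubsets A k = {B. B \<subseteq> A \<and> finite B \<and> card B = k}"

definition plegma :: "nat \<Rightarrow> (nat \<Rightarrow> nat set) \<Rightarrow> nat \<Rightarrow> bool" where
  "plegma k s l \<longleftrightarrow>
     (\<forall>j\<in>{1..l}. s j \<in> ksubsets UNIV k) \<and>
     (\<forall>i\<in>{1..k}. \<forall>j\<in>{1..<l}. enum_elem (s j) i < enum_elem (s (Suc j)) i) \<and>
     (l \<ge> 1 \<longrightarrow> (\<forall>i\<in>{1..<k}. enum_elem (s l) i < enum_elem (s 1) (Suc i)))"

end

theory Submission
  imports Defs
begin

text \<open>
  Call a \<open>k\<close>-set \<open>G\<close>-separated if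
  its elements are pairwise at distance at least \<open>G\<close>. If \<open>T\<close> is \<open>G\<close>-separated and
  \<open>m\<^sub>1 < \<dots> < m\<^sub>l\<close> lie in a common block \<open>[qG, (q+1)G)\<close>, then the translates
  \<open>T + m\<^sub>1, \<dots>, T + m\<^sub>l\<close> form a plegma family. Every set is the translate of its
  shape (the translate starting at \<open>0\<close>) by its minimum, so a family \<open>\<A>\<close> without plegma
  families has fewer than \<open>l\<close> separated members in each class (shape, block of the minimum).
  There are at most \<open>n\<^sup>k\<^sup>-\<^sup>1 (n/G + 1)\<close> classes and at most \<open>G n\<^sup>k\<^sup>-\<^sup>1\<close> non-separated
  \<open>k\<close>-subsets of \<open>{1..n}\<close>, so \<open>|\<A>| \<le> n\<^sup>k\<^sup>-\<^sup>1 (l (n/G + 1) + G)\<close>. Taking \<open>G\<close> large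
  and then \<open>n\<close> large this is below \<open>\<delta> (n/k)\<^sup>k \<le> \<delta> (n choose k)\<close>.
\<close>

lemma binomial_le_power: "(n::nat) choose r \<le> n ^ r"
  by (cases "r \<le> n") (auto simp: binomial_le_pow binomial_eq_0)

lemma finite_ksubsets: "finite A \<Longrightarrow> finite (ksubsets A k)"
  unfolding ksubsets_def by (rule finite_subset[of _ "Pow A"]) auto

lemma card_ksubsets: "finite A \<Longrightarrow> card (ksubsets A k) = card A choose k"
proof -
  assume "finite A"
  hence "ksubsets A k = {B. B \<subseteq> A \<and> card B = k}"
    by (auto simp: ksubsets_def intro: finite_subset)
  with \<open>finite A\<close> show ?thesis by (simp add: n_subsets)
qed

lemma sorted_list_of_set_strict_mono_image:
  assumes "finite T" and "strict_mono_on T f"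
  shows "sorted_list_of_set (f ` T) = map f (sorted_list_of_set T)"
proof -
  let ?L = "sorted_list_of_set T"
  have "sorted_wrt (<) (map f ?L)"
    using assms sorted_wrt_map_mono[of "(<)" ?L "(<)" f]
    by (auto simp: sorted_wrt_map strict_mono_on_def intro: sorted_wrt_mono_rel[of _ "(<)"])
  moreover have "card (f ` T) = length ?L"
    using assms by (simp add: card_image strict_mono_on_imp_inj_on)
  ultimately show ?thesis
    using assms by (intro sorted_list_of_set_unique[THEN iffD1]) auto
qed

lemma enum_elem_translate:
  assumes "finite T" "1 \<le> i" "i \<le> card T"
  shows "enum_elem ((\<lambda>x. x + c) ` T) i = enum_elem T i + c"
  using assms sorted_list_of_set_strict_mono_image[of T "\<lambda>x. x + c"]
  by (simp add: enum_elem_def strict_mono_on_def)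

lemma enum_elem_mem: "finite T \<Longrightarrow> 1 \<le> i \<Longrightarrow> i \<le> card T \<Longrightarrow> enum_elem T i \<in> T"
proof -
  assume "finite T" "1 \<le> i" "i \<le> card T"
  hence "sorted_list_of_set T ! (i - 1) \<in> set (sorted_list_of_set T)" by (intro nth_mem) simp
  with \<open>finite T\<close> show ?thesis by (simp add: enum_elem_def)
qed

lemma enum_elem_less: "1 \<le> i \<Longrightarrow> i < card T \<Longrightarrow> enum_elem T i < enum_elem T (Suc i)"
  unfolding enum_elem_def by (simp add: sorted_wrt_nth_less)

definition separated :: "nat \<Rightarrow> nat set \<Rightarrow> bool" where
  "separated G s \<longleftrightarrow> (\<forall>x\<in>s. \<forall>y\<in>s. x < y \<longrightarrow> x + G \<le> y)"

text \<open>Coordinates increase along the family because the shifts do, and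
  \<open>t\<^sub>i + m\<^sub>l < t\<^sub>i + m\<^sub>1 + G \<le> t\<^sub>i\<^sub>+\<^sub>1 + m\<^sub>1\<close> gives the interlacing condition.\<close>

lemma plegma_translates:
  assumes T: "finite T" "card T = k" and sep: "separated G T"
    and incr: "\<And>j. j \<in> {1..<l} \<Longrightarrow> m j < m (Suc j)"
    and close: "1 \<le> l \<Longrightarrow> m l < m 1 + G"
  shows "plegma k (\<lambda>j. (\<lambda>x. x + m j) ` T) l"
  unfolding plegma_def
proof (intro conjI ballI impI)
  fix j assume "j \<in> {1..l}"
  show "(\<lambda>x. x + m j) ` T \<in> ksubsets UNIV k"
    using T by (simp add: ksubsets_def card_image)
next
  fix i j assume "i \<in> {1..k}" "j \<in> {1..<l}"
  thus "enum_elem ((\<lambda>x. x + m j) ` T) i < enum_elem ((\<lambda>x. x + m (Suc j)) ` T) i"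
    using enum_elem_translate[OF T(1)] incr T(2) by simp
next
  fix i assume "1 \<le> l" "i \<in> {1..<k}"
  moreover have "enum_elem T i + G \<le> enum_elem T (Suc i)"
    using sep enum_elem_less[of i T] enum_elem_mem[OF T(1)] \<open>i \<in> {1..<k}\<close> T(2)
    unfolding separated_def by simp
  ultimately show "enum_elem ((\<lambda>x. x + m l) ` T) i < enum_elem ((\<lambda>x. x + m 1) ` T) (Suc i)"
    using enum_elem_translate[OF T(1)] close T(2) by simp
qed

lemma same_block_close: "(a::nat) div G = b div G \<Longrightarrow> 0 < G \<Longrightarrow> b < a + G"
proof -
  assume same: "a div G = b div G" and "0 < G"
  have "b = a div G * G + b mod G" using same by simp
  also have "\<dots> < a div G * G + G" using \<open>0 < G\<close> by simp
  also have "\<dots> \<le> a + G" by simp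
  finally show ?thesis .
qed

lemma plegma_from_block:
  assumes T: "finite T" "card T = k" "separated G T" and G: "0 < G"
    and M: "finite M" "l \<le> card M" and block: "\<forall>m\<in>M. m div G = q"
  shows "\<exists>s. plegma k s l \<and> (\<forall>j\<in>{1..l}. s j \<in> (\<lambda>m. (\<lambda>x. x + m) ` T) ` M)"
proof -
  define ms where "ms = sorted_list_of_set M"
  define m where "m j = ms ! (j - 1)" for j
  have len: "length ms = card M" and sorted: "sorted_wrt (<) ms" and set_ms: "set ms = M"
    using M(1) by (simp_all add: ms_def)
  have m_in: "m j \<in> M" if "j \<in> {1..l}" for j
    using that M(2) len set_ms nth_mem[of "j - 1" ms] by (auto simp: m_def)
  have incr: "m j < m (Suc j)" if "j \<in> {1..<l}" for j
    using that M(2) len sorted by (auto simp: m_def sorted_wrt_nth_less)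
  have close: "m l < m 1 + G" if "1 \<le> l"
    using block m_in[of 1] m_in[of l] that same_block_close[OF _ G] by simp
  have "plegma k (\<lambda>j. (\<lambda>x. x + m j) ` T) l"
    using plegma_translates[OF T incr close] by simp
  thus ?thesis using m_in by blast
qed

definition shape :: "nat set \<Rightarrow> nat set" where
  "shape s = (\<lambda>x. x - Min s) ` s"

definition Shapes :: "nat \<Rightarrow> nat \<Rightarrow> nat set set" where
  "Shapes n k = {T. T \<subseteq> {0..<n} \<and> 0 \<in> T \<and> card T = k}"

lemma translate_shape: "finite s \<Longrightarrow> s = (\<lambda>x. x + Min s) ` shape s"
  unfolding shape_def image_image by (auto simp: image_iff intro!: bexI)

lemma card_translate: "card ((\<lambda>x. x + (c::nat)) ` T) = card T"
  by (simp add: card_image)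

lemma separated_translate: "separated G ((\<lambda>x. x + c) ` T) \<longleftrightarrow> separated G T"
  unfolding separated_def by auto

lemma card_shape: "finite s \<Longrightarrow> card (shape s) = card s"
  using card_translate[of "Min s" "shape s"] translate_shape[of s] by simp

lemma separated_shape: "finite s \<Longrightarrow> separated G (shape s) \<longleftrightarrow> separated G s"
  using separated_translate[of G "Min s" "shape s"] translate_shape[of s] by simp

lemma shape_in_Shapes:
  assumes "s \<in> ksubsets {1..n} k" "1 \<le> k"
  shows "shape s \<in> Shapes n k"
proof -
  have s: "finite s" "card s = k" "s \<subseteq> {1..n}" using assms(1) by (auto simp: ksubsets_def)
  hence "Min s \<in> s" using assms(2) by (intro Min_in) auto
  have "x - Min s < n" if "x \<in> s" for x
  proof -
    have "1 \<le> Min s" "1 \<le> x" "x \<le> n" using that \<open>Min s \<in> s\<close> s(3) by auto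
    thus ?thesis by linarith
  qed
  hence "shape s \<subseteq> {0..<n}" "0 \<in> shape s"
    using \<open>Min s \<in> s\<close> by (auto simp: shape_def)
  thus ?thesis using card_shape s by (simp add: Shapes_def)
qed

text \<open>A shape is determined by its \<open>k - 1\<close> nonzero elements in \<open>{1..<n}\<close>, so there are
  at most \<open>n\<^sup>k\<^sup>-\<^sup>1\<close> shapes.\<close>

lemma card_Shapes: "card (Shapes n k) \<le> n ^ (k - 1)"
proof -
  have inj: "inj_on (\<lambda>T. T - {0}) (Shapes n k)"
    unfolding inj_on_def Shapes_def by (metis insert_Diff mem_Collect_eq)
  have into: "(\<lambda>T. T - {0}) ` Shapes n k \<subseteq> ksubsets {0..<n} (k - 1)"
    unfolding Shapes_def ksubsets_def using finite_subset by fastforce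
  have "card (Shapes n k) \<le> card (ksubsets {0..<n} (k - 1))"
    using card_inj_on_le[OF inj into finite_ksubsets] by simp
  also have "\<dots> = n choose (k - 1)" by (simp add: card_ksubsets)
  also have "\<dots> \<le> n ^ (k - 1)" by (rule binomial_le_power)
  finally show ?thesis .
qed

lemma finite_Shapes: "finite (Shapes n k)"
  unfolding Shapes_def by (rule finite_subset[of _ "Pow {0..<n}"]) auto

text \<open>Few \<open>k\<close>-subsets of \<open>{1..n}\<close> fail to be \<open>G\<close>-separated: such a set contains a pair
  \<open>x < x + d\<close> with \<open>d < G\<close>, and at most \<open>n\<^sup>k\<^sup>-\<^sup>2\<close> sets contain a given pair.\<close>

lemma separated_if_card_le_1: "card s \<le> 1 \<Longrightarrow> finite s \<Longrightarrow> separated G s"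
  unfolding separated_def by (metis card_le_Suc0_iff_eq less_irrefl One_nat_def)

lemma card_ksubsets_containing_pair:
  assumes "finite A" "x \<noteq> y"
  shows "card {s \<in> ksubsets A k. x \<in> s \<and> y \<in> s} \<le> card A ^ (k - 2)"
proof -
  let ?P = "{s \<in> ksubsets A k. x \<in> s \<and> y \<in> s}"
  have inj: "inj_on (\<lambda>s. s - {x, y}) ?P"
    unfolding inj_on_def by (metis Diff_partition empty_subsetI insert_subset mem_Collect_eq)
  have into: "(\<lambda>s. s - {x, y}) ` ?P \<subseteq> ksubsets A (k - 2)"
    unfolding ksubsets_def using assms(2) by (auto simp: card_Diff_subset)
  have "card ?P \<le> card (ksubsets A (k - 2))"
    using card_inj_on_le[OF inj into finite_ksubsets[OF assms(1)]] .
  also have "\<dots> \<le> card A ^ (k - 2)"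
    using card_ksubsets[OF assms(1)] binomial_le_power by simp
  finally show ?thesis .
qed

lemma card_not_separated:
  "card {s \<in> ksubsets {1..n} k. \<not> separated G s} \<le> G * n ^ (k - 1)"
proof (cases "k \<le> 1")
  case True
  hence none: "{s \<in> ksubsets {1..n} k. \<not> separated G s} = {}"
    using separated_if_card_le_1 by (auto simp: ksubsets_def)
  show ?thesis unfolding none by simp
next
  case False
  define P where "P x d = {s \<in> ksubsets {1..n} k. x \<in> s \<and> x + d \<in> s}" for x d
  have "{s \<in> ksubsets {1..n} k. \<not> separated G s} \<subseteq> (\<Union>x\<in>{1..n}. \<Union>d\<in>{1..<G}. P x d)"
  proof
    fix s assume "s \<in> {s \<in> ksubsets {1..n} k. \<not> separated G s}"
    then obtain x y where "s \<in> ksubsets {1..n} k" "x \<in> s" "y \<in> s" "x < y" "y < x + G"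
      unfolding separated_def by auto
    moreover hence "x \<in> {1..n}" by (auto simp: ksubsets_def)
    ultimately show "s \<in> (\<Union>x\<in>{1..n}. \<Union>d\<in>{1..<G}. P x d)"
      unfolding P_def by (intro UN_I[of x] UN_I[of "y - x"]) auto
  qed
  hence "card {s \<in> ksubsets {1..n} k. \<not> separated G s} \<le> card (\<Union>x\<in>{1..n}. \<Union>d\<in>{1..<G}. P x d)"
    by (rule card_mono[rotated])
      (auto simp: P_def intro!: finite_subset[OF _ finite_ksubsets[of "{1..n}" k]])
  also have "\<dots> \<le> (\<Sum>x\<in>{1..n}. \<Sum>d\<in>{1..<G}. card (P x d))"
    by (intro card_UN_le[THEN order_trans] sum_mono card_UN_le) simp_all
  also have "\<dots> \<le> (\<Sum>x\<in>{1..n}. \<Sum>d\<in>{1..<G}. n ^ (k - 2))"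
    using card_ksubsets_containing_pair[of "{1..n}"] by (intro sum_mono) (simp add: P_def)
  also have "\<dots> = (G - 1) * (n * n ^ (k - 2))" by simp
  also have "\<dots> = (G - 1) * n ^ (k - 1)"
    using False by (simp add: Suc_diff_Suc[symmetric] numeral_2_eq_2)
  also have "\<dots> \<le> G * n ^ (k - 1)" by simp
  finally show ?thesis .
qed

text \<open>A class of \<open>l\<close> separated sets sharing shape and block of the minimum contains a plegma
  family: its members are the translates of the common shape by their minima.\<close>

lemma plegma_in_class:
  assumes G: "0 < G" and F: "finite F" "l \<le> card F"
    and in_class: "\<And>s. s \<in> F \<Longrightarrow>
      finite s \<and> card s = k \<and> separated G s \<and> shape s = T \<and> Min s div G = q"
  shows "\<exists>s. plegma k s l \<and> (\<forall>j\<in>{1..l}. s j \<in> F)"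
proof (cases "F = {}")
  case True
  thus ?thesis using F by (simp add: plegma_def)
next
  case False
  then obtain t where "t \<in> F" by blast
  hence T: "finite T" "card T = k" "separated G T"
    using in_class[of t] card_shape separated_shape by (auto simp: shape_def)
  have translate: "s = (\<lambda>x. x + Min s) ` T" if "s \<in> F" for s
    using in_class[OF that] translate_shape by auto
  hence "inj_on Min F" by (metis inj_onI)
  hence "card (Min ` F) = card F" by (rule card_image)
  moreover have "\<forall>m\<in>Min ` F. m div G = q" using in_class by auto
  ultimately obtain s where "plegma k s l" "\<forall>j\<in>{1..l}. s j \<in> (\<lambda>m. (\<lambda>x. x + m) ` T) ` Min ` F"
    using plegma_from_block[OF T G _ _] F by (metis finite_imageI)
  moreover have "(\<lambda>m. (\<lambda>x. x + m) ` T) ` Min ` F = F"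
    using translate by (auto simp: image_image)
  ultimately show ?thesis by auto
qed

text \<open>Separated members of a family without plegma families are few: sorted into classes by
  (shape, block of the minimum), each class has fewer than \<open>l\<close> members, and there are at
  most \<open>n\<^sup>k\<^sup>-\<^sup>1 (n div G + 1)\<close> classes.\<close>

lemma card_separated_plegma_free:
  assumes k: "1 \<le> k" and G: "0 < G" and A: "A \<subseteq> ksubsets {1..n} k"
    and free: "\<not> (\<exists>s. plegma k s l \<and> (\<forall>j\<in>{1..l}. s j \<in> A))"
  shows "card {s \<in> A. separated G s} \<le> (l - 1) * (n ^ (k - 1) * (n div G + 1))"
proof -
  have finA: "finite A" using A finite_ksubsets[of "{1..n}" k] finite_subset by auto
  define Sep where "Sep = {s \<in> A. separated G s}"
  define Keys where "Keys = Shapes n k \<times> {0..n div G}"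
  define fiber where "fiber T q = {s \<in> Sep. shape s = T \<and> Min s div G = q}" for T q
  have fiber_small: "card (fiber T q) \<le> l - 1" for T q
  proof (rule ccontr)
    assume "\<not> card (fiber T q) \<le> l - 1"
    moreover have "finite (fiber T q)" using finA by (simp add: fiber_def Sep_def)
    moreover have "finite s \<and> card s = k \<and> separated G s \<and> shape s = T \<and> Min s div G = q"
      if "s \<in> fiber T q" for s
      using that A by (auto simp: fiber_def Sep_def ksubsets_def)
    ultimately obtain s where "plegma k s l" "\<forall>j\<in>{1..l}. s j \<in> fiber T q"
      using plegma_in_class[OF G, of "fiber T q" l] by fastforce
    thus False using free by (auto simp: fiber_def Sep_def)
  qed
  have "Sep \<subseteq> (\<Union>(T, q)\<in>Keys. fiber T q)"
  proof
    fix s assume s: "s \<in> Sep"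
    hence ks: "s \<in> ksubsets {1..n} k" using A by (auto simp: Sep_def)
    have "Min s \<in> s" using ks k by (intro Min_in) (auto simp: ksubsets_def)
    hence "Min s \<le> n" using ks by (auto simp: ksubsets_def)
    with shape_in_Shapes[OF ks k] have "(shape s, Min s div G) \<in> Keys"
      by (auto simp: Keys_def div_le_mono)
    thus "s \<in> (\<Union>(T, q)\<in>Keys. fiber T q)"
      using s by (intro UN_I[of "(shape s, Min s div G)"]) (simp_all add: fiber_def)
  qed
  moreover have "finite Keys" by (simp add: Keys_def finite_Shapes)
  moreover have "finite (fiber T q)" for T q using finA by (simp add: fiber_def Sep_def)
  ultimately have "card Sep \<le> card (\<Union>(T, q)\<in>Keys. fiber T q)"
    by (intro card_mono) auto
  also have "\<dots> \<le> (\<Sum>(T, q)\<in>Keys. card (fiber T q))"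
    by (rule card_UN_le[THEN order_trans]) (simp_all add: \<open>finite Keys\<close> split_def)
  also have "\<dots> \<le> card Keys * (l - 1)"
    using sum_bounded_above[of Keys "\<lambda>(T, q). card (fiber T q)" "l - 1"] fiber_small
    by (simp add: split_def)
  also have "\<dots> = (l - 1) * (card (Shapes n k) * (n div G + 1))"
    by (simp add: Keys_def card_cartesian_product)
  also have "\<dots> \<le> (l - 1) * (n ^ (k - 1) * (n div G + 1))"
    using card_Shapes[of n k] by (intro mult_le_mono2 mult_le_mono1)
  finally show ?thesis unfolding Sep_def .
qed

definition plegma_free_bound :: "nat \<Rightarrow> nat \<Rightarrow> nat \<Rightarrow> nat \<Rightarrow> nat" where
  "plegma_free_bound k l G n = (l - 1) * (n ^ (k - 1) * (n div G + 1)) + G * n ^ (k - 1)"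

lemma card_plegma_free:
  assumes k: "1 \<le> k" and G: "0 < G" and A: "A \<subseteq> ksubsets {1..n} k"
    and free: "\<not> (\<exists>s. plegma k s l \<and> (\<forall>j\<in>{1..l}. s j \<in> A))"
  shows "card A \<le> plegma_free_bound k l G n"
proof -
  let ?Sep = "{s \<in> A. separated G s}"
  have "A - ?Sep \<subseteq> {s \<in> ksubsets {1..n} k. \<not> separated G s}" using A by auto
  hence "card (A - ?Sep) \<le> card {s \<in> ksubsets {1..n} k. \<not> separated G s}"
    by (rule card_mono[rotated]) (use finite_ksubsets[of "{1..n}" k] in auto)
  also have "\<dots> \<le> G * n ^ (k - 1)" by (rule card_not_separated)
  finally have card_rest: "card (A - ?Sep) \<le> G * n ^ (k - 1)" .
  have "card A \<le> card ?Sep + card (A - ?Sep)"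
    using card_Un_le[of ?Sep "A - ?Sep"] by (simp add: Un_absorb1)
  thus ?thesis using card_separated_plegma_free[OF assms] card_rest
    by (simp add: plegma_free_bound_def)
qed

lemma linear_slack:
  assumes c: "0 < c"
  shows "\<exists>G>0. \<exists>n0. \<forall>n\<ge>n0. real l * (real n / real G + 1) + real G < c * real n"
proof (intro exI conjI allI impI)
  define G where "G = nat \<lceil>2 * real l / c\<rceil> + 1"
  show "0 < G" by (simp add: G_def)
  fix n assume n: "nat \<lceil>2 * (real G + real l) / c\<rceil> + 1 \<le> n"
  have "2 * real l / c < real G" unfolding G_def by linarith
  hence "real l / real G \<le> c / 2" using c \<open>0 < G\<close> by (simp add: field_simps)
  hence "real l / real G * real n \<le> c / 2 * real n" by (rule mult_right_mono) simp
  hence "real l * (real n / real G) \<le> c * real n / 2" by simp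
  moreover have "2 * (real G + real l) / c < real n" using n by linarith
  hence "real l + real G < c * real n / 2" using c by (simp add: field_simps)
  ultimately show "real l * (real n / real G + 1) + real G < c * real n"
    unfolding distrib_left mult_1_right by linarith
qed

text \<open>Since \<open>(n choose k) \<ge> (n/k)\<^sup>k\<close>, the counting bound is eventually below \<open>\<delta> (n choose k)\<close>.\<close>

lemma plegma_free_bound_small:
  assumes \<delta>: "0 < \<delta>" and k: "1 \<le> k"
  shows "\<exists>G>0. \<exists>n0. \<forall>n\<ge>n0.
    real (plegma_free_bound k l G n) < \<delta> * real (n choose k)"
proof -
  define c where "c = \<delta> / real k ^ k"
  have "0 < c" using \<delta> k by (simp add: c_def)
  then obtain G n0 where G: "0 < G"
    and slack: "\<And>n. n \<ge> n0 \<Longrightarrow> real l * (real n / real G + 1) + real G < c * real n"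
    using linear_slack by blast
  have "real (plegma_free_bound k l G n) < \<delta> * real (n choose k)"
    if n: "max n0 k \<le> n" for n
  proof -
    have "0 < real n ^ (k - 1)" using n k by simp
    have "real (n div G) * real G \<le> real n"
      by (metis of_nat_le_iff of_nat_mult div_times_less_eq_dividend)
    hence div_le: "real (n div G) \<le> real n / real G" using G by (simp add: le_divide_eq)
    have "real (plegma_free_bound k l G n)
        \<le> real (l * (n ^ (k - 1) * (n div G + 1)) + G * n ^ (k - 1))"
      unfolding plegma_free_bound_def by (intro of_nat_mono add_mono mult_le_mono1) simp_all
    also have "\<dots> = real n ^ (k - 1) * (real l * (real (n div G) + 1) + real G)"
      by (simp add: algebra_simps)
    also have "\<dots> \<le> real n ^ (k - 1) * (real l * (real n / real G + 1) + real G)"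
      using div_le \<open>0 < real n ^ (k - 1)\<close> by (simp add: mult_left_mono)
    also have "\<dots> < real n ^ (k - 1) * (c * real n)"
      using slack n \<open>0 < real n ^ (k - 1)\<close> by simp
    also have "\<dots> = \<delta> * (real n / real k) ^ k"
      using k by (simp add: c_def power_divide power_eq_if[of "real n" k])
    also have "\<dots> \<le> \<delta> * real (n choose k)"
      using binomial_ge_n_over_k_pow_k[of k n] n \<delta> by simp
    finally show ?thesis .
  qed
  thus ?thesis using G by blast
qed

text \<open>For \<open>k = 0\<close> every nonempty family consists of the empty set, which forms a plegma family.\<close>

lemma plegma_of_empty_sets:
  assumes "A \<subseteq> ksubsets X 0" "A \<noteq> {}"
  shows "\<exists>s. plegma 0 s l \<and> (\<forall>j\<in>{1..l}. s j \<in> A)"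
proof -
  have "A = {{}}" using assms by (auto simp: ksubsets_def)
  thus ?thesis by (intro exI[of _ "\<lambda>_. {}"]) (simp add: plegma_def ksubsets_def)
qed

theorem mainTheorem13:
  fixes \<delta> :: real and k l :: nat
  assumes "\<delta> > 0"
  shows "\<exists>n0::nat. \<forall>n\<ge>n0. \<forall>\<A>::nat set set.
           \<A> \<subseteq> ksubsets {1..n} k \<and> real (card \<A>) \<ge> \<delta> * real (n choose k) \<longrightarrow>
           (\<exists>s. plegma k s l \<and> (\<forall>j\<in>{1..l}. s j \<in> \<A>))"
proof (cases "k = 0")
  case True
  have "\<A> \<noteq> {}" if "real (card \<A>) \<ge> \<delta> * real (n choose k)" for n and \<A> :: "nat set set"
    using that assms True by auto
  thus ?thesis using plegma_of_empty_sets True by blast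
next
  case False
  then obtain G n0 where G: "0 < G" and small: "\<And>n. n \<ge> n0 \<Longrightarrow>
      real (plegma_free_bound k l G n) < \<delta> * real (n choose k)"
    using plegma_free_bound_small[OF assms, of k l] by auto
  show ?thesis
  proof (intro exI[of _ n0] allI impI)
    fix n and \<A> :: "nat set set"
    assume n: "n \<ge> n0" and \<A>: "\<A> \<subseteq> ksubsets {1..n} k \<and> real (card \<A>) \<ge> \<delta> * real (n choose k)"
    show "\<exists>s. plegma k s l \<and> (\<forall>j\<in>{1..l}. s j \<in> \<A>)"
    proof (rule ccontr)
      assume "\<not> ?thesis"
      hence "card \<A> \<le> plegma_free_bound k l G n"
        using card_plegma_free[OF _ G] \<A> False by simp
      thus False using small[OF n] \<A> by linarith
    qed
  qed
qed

end
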